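(* Let $\{Z_n\}_{n\in\mathbb{N}}$ be a sequence of diagonal matrices $Z_n=\mathrm{diag}(z_1^{(n)},\ldots,z_n^{(n)})$ with $z_j^{(n)}\geq 1$ having bounded squeezing of degree $\zeta$ with $0\leq\zeta<1$, and assume that the average energy $\lambda(n)=\frac{1}{2n}\sum_{j=1}^n (z_j^{(n)}+1/z_j^{(n)})$ is uniformly bounded in $n$. Let $\{k_n\}_{n\in\mathbb{N}}$ be a sequence of subsystem sizes bounded of degree $\kappa$ with $0\leq\kappa<1$. Then $$\mathbb{E}\big[\mathrm{tr}\big((J_{k_n}M_{n,k_n}(U))^2\big)\big]=-2k_n\lambda(n)^2+O(n^{2\kappa+\zeta-1}),$$ where the expectation is over $U$ drawn from the Haar measure on $U(n)$.
   Context: For $m\in\mathbb{N}$ let $J_m=\begin{pmatrix}0_m&-I_m\\ I_m&0_m\end{pmatrix}$. For $U\in U(n)$ let $\eta(U)=\begin{pmatrix}\mathrm{Re}(U)&\mathrm{Im}(U)\\ -\mathrm{Im}(U)&\mathrm{Re}(U)\end{pmatrix}$. Set $\hat Z_n=Z_n\oplus Z_n^{-1}$ and $M_n(U)=\eta(U)\hat Z_n\eta(U)^T$. For $1\leq k\leq n$, $M_{n,k}(U)$ denotes the $2k\times 2k$ submatrix of $M_n(U)$ with rows and columns indexed by $\{1,\ldots,k\}\cup\{n+1,\ldots,n+k\}$. A sequence $\{Z_n\}$ has bounded squeezing of degree $\zeta\ge0$ if there is $C>0$ with $\|Z_n\|_\infty\leq Cn^\zeta$ for all large enough $n$. A sequence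 $\{k_n\}$ with $k_n\in\{1,\ldots,n\}$ is bounded of degree $\kappa\ge0$ if there is $K>0$ with $k_n\leq Kn^\kappa$ for all large enough $n$. *)

theory Defs
  imports "HOL-Analysis.Analysis" "HOL-Probability.Probability"
begin

text \<open>Square matrices of size m are represented as functions nat => nat => 'a,
  with 0-based indices i, j < m; entries outside the range are zero.\<close>

definition mmul :: "nat \<Rightarrow> (nat \<Rightarrow> nat \<Rightarrow> 'a::comm_semiring_1) \<Rightarrow> (nat \<Rightarrow> nat \<Rightarrow> 'a) \<Rightarrow> nat \<Rightarrow> nat \<Rightarrow> 'a" where
  "mmul m A B = (\<lambda>i j. if i < m \<and> j < m then (\<Sum>l<m. A i l * B l j) else 0)"

definition idm :: "nat \<Rightarrow> nat \<Rightarrow> nat \<Rightarrow> 'a::zero_neq_one" where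
  "idm m = (\<lambda>i j. if i = j \<and> i < m then 1 else 0)"

definition mtrans :: "(nat \<Rightarrow> nat \<Rightarrow> 'a) \<Rightarrow> nat \<Rightarrow> nat \<Rightarrow> 'a" where
  "mtrans A = (\<lambda>i j. A j i)"

definition ctrans :: "(nat \<Rightarrow> nat \<Rightarrow> complex) \<Rightarrow> nat \<Rightarrow> nat \<Rightarrow> complex" where
  "ctrans A = (\<lambda>i j. cnj (A j i))"

definition mtrace :: "nat \<Rightarrow> (nat \<Rightarrow> nat \<Rightarrow> 'a::comm_monoid_add) \<Rightarrow> 'a" where
  "mtrace m A = (\<Sum>i<m. A i i)"

definition unitary_group :: "nat \<Rightarrow> (nat \<Rightarrow> nat \<Rightarrow> complex) set" where
  "unitary_group n = {U. (\<forall>i j. (n \<le> i \<or> n \<le> j) \<longrightarrow> U i j = 0) \<and> mmul n (ctrans U) U = idm n}"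

definition haar_unitary :: "nat \<Rightarrow> (nat \<Rightarrow> nat \<Rightarrow> complex) measure \<Rightarrow> bool" where
  "haar_unitary n \<mu> \<longleftrightarrow> sets \<mu> = sets borel \<and> prob_space \<mu> \<and>
     emeasure \<mu> (unitary_group n) = 1 \<and>
     (\<forall>A\<in>unitary_group n. distr \<mu> borel (mmul n A) = \<mu>)"

definition Jmat :: "nat \<Rightarrow> nat \<Rightarrow> nat \<Rightarrow> real" where
  "Jmat m = (\<lambda>i j. if i < m \<and> j = i + m then -1
                   else if m \<le> i \<and> i < 2*m \<and> j + m = i then 1 else 0)"

text \<open>eta(U) = [[Re U, Im U], [-Im U, Re U]] (size 2n).\<close>
definition eta :: "nat \<Rightarrow> (nat \<Rightarrow> nat \<Rightarrow> complex) \<Rightarrow> nat \<Rightarrow> nat \<Rightarrow> real" where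
  "eta n U = (\<lambda>a c.
     if a < n \<and> c < n then Re (U a c)
     else if a < n \<and> n \<le> c \<and> c < 2*n then Im (U a (c - n))
     else if n \<le> a \<and> a < 2*n \<and> c < n then - Im (U (a - n) c)
     else if n \<le> a \<and> a < 2*n \<and> n \<le> c \<and> c < 2*n then Re (U (a - n) (c - n))
     else 0)"

text \<open>Zhat_n = Z_n (+) Z_n^{-1}, where Z_n = diag(z n 0, ..., z n (n-1)).\<close>
definition Zhat :: "nat \<Rightarrow> (nat \<Rightarrow> nat \<Rightarrow> real) \<Rightarrow> nat \<Rightarrow> nat \<Rightarrow> real" where
  "Zhat n z = (\<lambda>a c. if a \<noteq> c then 0
                      else if a < n then z n a
                      else if a < 2*n then 1 / z n (a - n) else 0)"

definition Mn :: "nat \<Rightarrow> (nat \<Rightarrow> nat \<Rightarrow> real) \<Rightarrow> (nat \<Rightarrow> nat \<Rightarrow> complex) \<Rightarrow> nat \<Rightarrow> nat \<Rightarrow> real" where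
  "Mn n z U = mmul (2*n) (mmul (2*n) (eta n U) (Zhat n z)) (mtrans (eta n U))"

text \<open>M_{n,k}: rows/columns {1..k} and {n+1..n+k} (1-based); 0-based index map.\<close>
definition subidx :: "nat \<Rightarrow> nat \<Rightarrow> nat \<Rightarrow> nat" where
  "subidx n k i = (if i < k then i else n + (i - k))"

definition Mnk :: "nat \<Rightarrow> nat \<Rightarrow> (nat \<Rightarrow> nat \<Rightarrow> real) \<Rightarrow> (nat \<Rightarrow> nat \<Rightarrow> complex) \<Rightarrow> nat \<Rightarrow> nat \<Rightarrow> real" where
  "Mnk n k z U = (\<lambda>i j. if i < 2*k \<and> j < 2*k then Mn n z U (subidx n k i) (subidx n k j) else 0)"

text \<open>Sup norm of the diagonal matrix Z_n (largest diagonal entry in absolute value).\<close>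
definition Znorm :: "nat \<Rightarrow> (nat \<Rightarrow> nat \<Rightarrow> real) \<Rightarrow> real" where
  "Znorm n z = Max ((\<lambda>j. \<bar>z n j\<bar>) ` {..<n})"

definition avg_energy :: "nat \<Rightarrow> (nat \<Rightarrow> nat \<Rightarrow> real) \<Rightarrow> real" where
  "avg_energy n z = (1 / (2 * real n)) * (\<Sum>j<n. z n j + 1 / z n j)"

end

theory Submission
  imports Defs "HOL-Combinatorics.Transposition"
begin

(* With a_l = (z_l + 1/z_l)/2, b_l = (z_l - 1/z_l)/2, P = U diag(a) U^* and Q = U diag(b) U^T,
   the four n x n blocks of M_n(U) are Re P + Re Q, Im P - Im Q, -Im P - Im Q and Re P - Re Q,
   so tr((J_k M_{n,k}(U))^2) = 2 * sum_{i,j<k} (|Q_ij|^2 - |P_ij|^2).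
   The Haar second moments of these entries follow from left invariance alone: row transpositions
   make E|P_ij|^2 and E|Q_ij|^2 depend only on whether i = j, a phase and a rotation by pi/4 in a
   coordinate plane give one linear relation each, and the unitary invariants tr P = sum a_l,
   sum |P_ij|^2 = sum a_l^2 and sum |Q_ij|^2 = sum b_l^2 fix the remaining constants.
   The exact expectation so obtained differs from -2 k lambda^2 by at most 4 k^2 |Z_n| lambda / n. *)

section \<open>Block decomposition of M_n(U)\<close>

definition diag_conj :: "nat \<Rightarrow> (nat \<Rightarrow> real) \<Rightarrow> (nat \<Rightarrow> nat \<Rightarrow> complex) \<Rightarrow> nat \<Rightarrow> nat \<Rightarrow> complex" where
  "diag_conj n w U i j = (\<Sum>l<n. complex_of_real (w l) * U i l * cnj (U j l))"

definition diag_congr :: "nat \<Rightarrow> (nat \<Rightarrow> real) \<Rightarrow> (nat \<Rightarrow> nat \<Rightarrow> complex) \<Rightarrow> nat \<Rightarrow> nat \<Rightarrow> complex" where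
  "diag_congr n w U i j = (\<Sum>l<n. complex_of_real (w l) * U i l * U j l)"

(* With z = exp (2 r) these are cosh (2 r) and sinh (2 r). *)
definition cosh_weight :: "nat \<Rightarrow> (nat \<Rightarrow> nat \<Rightarrow> real) \<Rightarrow> nat \<Rightarrow> real" where
  "cosh_weight n z l = (z n l + 1 / z n l) / 2"

definition sinh_weight :: "nat \<Rightarrow> (nat \<Rightarrow> nat \<Rightarrow> real) \<Rightarrow> nat \<Rightarrow> real" where
  "sinh_weight n z l = (z n l - 1 / z n l) / 2"

lemma diag_conj_commute: "diag_conj n w U j i = cnj (diag_conj n w U i j)"
  unfolding diag_conj_def by (simp add: mult.commute mult.left_commute)

lemma diag_congr_commute: "diag_congr n w U j i = diag_congr n w U i j"
  unfolding diag_congr_def by (simp add: mult.commute mult.left_commute)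

lemma Im_diag_conj_diag [simp]: "Im (diag_conj n w U i i) = 0"
  using arg_cong[OF diag_conj_commute[of n w U i i], of Im] by simp

lemma sum_lessThan_double:
  fixes n :: nat
  shows "(\<Sum>d<2 * n. f d) = (\<Sum>l<n. f l) + (\<Sum>l<n. f (n + l) :: 'a::comm_monoid_add)"
proof -
  have "x \<in> (\<lambda>l. n + l) ` {..<n}" if "x < 2 * n" "\<not> x < n" for x
    using that by (intro image_eqI[of _ _ "x - n"]) auto
  then have "{..<2 * n} = {..<n} \<union> (\<lambda>l. n + l) ` {..<n}" by auto
  moreover have "{..<n} \<inter> (\<lambda>l. n + l) ` {..<n} = {}" by auto
  ultimately show ?thesis by (simp add: sum.union_disjoint sum.reindex)
qed

lemma Mn_eq_sum:
  assumes "a < 2 * n" "c < 2 * n"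
  shows "Mn n z U a c = (\<Sum>d<2 * n. eta n U a d * Zhat n z d d * eta n U c d)"
proof -
  have "(\<Sum>e<2 * n. eta n U a e * Zhat n z e d) = eta n U a d * Zhat n z d d" if "d < 2 * n" for d
    using that by (subst sum.remove[where x = d]) (auto simp: Zhat_def)
  then show ?thesis
    using assms unfolding Mn_def mmul_def mtrans_def by (auto intro!: sum.cong)
qed

lemma Mn_blocks:
  fixes U :: "nat \<Rightarrow> nat \<Rightarrow> complex" and z :: "nat \<Rightarrow> nat \<Rightarrow> real"
  assumes "i < n" "j < n"
  defines "P \<equiv> diag_conj n (cosh_weight n z) U i j" and "Q \<equiv> diag_congr n (sinh_weight n z) U i j"
  shows "Mn n z U i j = Re P + Re Q" "Mn n z U i (n + j) = Im P - Im Q"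
    "Mn n z U (n + i) j = - Im P - Im Q" "Mn n z U (n + i) (n + j) = Re P - Re Q"
proof -
  have M: "Mn n z U a c = (\<Sum>l<n. eta n U a l * Zhat n z l l * eta n U c l
             + eta n U a (n + l) * Zhat n z (n + l) (n + l) * eta n U c (n + l))"
    if "a < 2 * n" "c < 2 * n" for a c
    using that by (simp only: Mn_eq_sum sum_lessThan_double sum.distrib)
  have ReIm: "Re (diag_conj n w U i j) = (\<Sum>l<n. w l * (Re (U i l) * Re (U j l) + Im (U i l) * Im (U j l)))"
    "Im (diag_conj n w U i j) = (\<Sum>l<n. w l * (Im (U i l) * Re (U j l) - Re (U i l) * Im (U j l)))"
    "Re (diag_congr n w U i j) = (\<Sum>l<n. w l * (Re (U i l) * Re (U j l) - Im (U i l) * Im (U j l)))"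
    "Im (diag_congr n w U i j) = (\<Sum>l<n. w l * (Im (U i l) * Re (U j l) + Re (U i l) * Im (U j l)))" for w
    unfolding diag_conj_def diag_congr_def by (simp_all add: Re_sum Im_sum algebra_simps)
  have Zhat: "Zhat n z l l = cosh_weight n z l + sinh_weight n z l"
    "Zhat n z (n + l) (n + l) = cosh_weight n z l - sinh_weight n z l" if "l < n" for l
    using that by (auto simp: Zhat_def cosh_weight_def sinh_weight_def field_simps)
  have eta: "eta n U i l = Re (U i l)" "eta n U i (n + l) = Im (U i l)"
    "eta n U (n + i) l = - Im (U i l)" "eta n U (n + i) (n + l) = Re (U i l)"
    "eta n U j l = Re (U j l)" "eta n U j (n + l) = Im (U j l)"
    "eta n U (n + j) l = - Im (U j l)" "eta n U (n + j) (n + l) = Re (U j l)" if "l < n" for l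
    using that assms(1,2) by (auto simp: eta_def)
  note ij = \<open>i < n\<close> \<open>j < n\<close>
  have idx: "i < 2 * n" "j < 2 * n" "n + i < 2 * n" "n + j < 2 * n" using ij by auto
  show "Mn n z U i j = Re P + Re Q"
    unfolding M[OF idx(1,2)] P_def Q_def ReIm sum.distrib[symmetric]
    by (intro sum.cong refl) (simp only: lessThan_iff Zhat eta, simp add: algebra_simps)
  show "Mn n z U i (n + j) = Im P - Im Q"
    unfolding M[OF idx(1,4)] P_def Q_def ReIm sum_subtractf[symmetric]
    by (intro sum.cong refl) (simp only: lessThan_iff Zhat eta, simp add: algebra_simps)
  show "Mn n z U (n + i) j = - Im P - Im Q"
    unfolding M[OF idx(3,2)] P_def Q_def ReIm sum_subtractf[symmetric] sum_negf[symmetric]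
    by (intro sum.cong refl) (simp only: lessThan_iff Zhat eta, simp add: algebra_simps)
  show "Mn n z U (n + i) (n + j) = Re P - Re Q"
    unfolding M[OF idx(3,4)] P_def Q_def ReIm sum_subtractf[symmetric]
    by (intro sum.cong refl) (simp only: lessThan_iff Zhat eta, simp add: algebra_simps)
qed

lemma mmul_Jmat_left:
  assumes "a < 2 * k" "c < 2 * k"
  shows "mmul (2 * k) (Jmat k) N a c = (if a < k then - N (a + k) c else N (a - k) c)"
proof (cases "a < k")
  case True
  have "(\<Sum>e<2 * k. Jmat k a e * N e c) = Jmat k a (a + k) * N (a + k) c"
    using True by (subst sum.remove[where x = "a + k"]) (auto simp: Jmat_def)
  then show ?thesis using True assms by (simp add: mmul_def Jmat_def)
next
  case False
  have "(\<Sum>e<2 * k. Jmat k a e * N e c) = Jmat k a (a - k) * N (a - k) c"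
    using False assms
    by (subst sum.remove[where x = "a - k"]) (auto simp: Jmat_def split: if_splits intro!: sum.neutral)
  then show ?thesis using False assms by (simp add: mmul_def Jmat_def)
qed

lemma Mnk_blocks:
  assumes "i < k" "j < k"
  shows "Mnk n k z U i j = Mn n z U i j" "Mnk n k z U i (k + j) = Mn n z U i (n + j)"
    "Mnk n k z U (k + i) j = Mn n z U (n + i) j" "Mnk n k z U (k + i) (k + j) = Mn n z U (n + i) (n + j)"
  using assms by (auto simp: Mnk_def subidx_def)

lemma trace_JM_squared:
  fixes U :: "nat \<Rightarrow> nat \<Rightarrow> complex" and z :: "nat \<Rightarrow> nat \<Rightarrow> real"
  assumes "k \<le> n"
  defines "P \<equiv> diag_conj n (cosh_weight n z) U" and "Q \<equiv> diag_congr n (sinh_weight n z) U"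
  shows "mtrace (2 * k) (mmul (2 * k) (mmul (2 * k) (Jmat k) (Mnk n k z U)) (mmul (2 * k) (Jmat k) (Mnk n k z U)))
    = (\<Sum>i<k. \<Sum>j<k. 2 * (cmod (Q i j))\<^sup>2 - 2 * (cmod (P i j))\<^sup>2)"
proof -
  define N where "N = Mnk n k z U"
  define JN where "JN = mmul (2 * k) (Jmat k) N"
  have JN: "JN i j = - N (k + i) j" "JN i (k + j) = - N (k + i) (k + j)"
    "JN (k + i) j = N i j" "JN (k + i) (k + j) = N i (k + j)" if "i < k" "j < k" for i j
    using that unfolding JN_def by (subst mmul_Jmat_left; simp add: add.commute)+
  have N: "N i j = Re (P i j) + Re (Q i j)" "N i (k + j) = Im (P i j) - Im (Q i j)"
    "N (k + i) j = - Im (P i j) - Im (Q i j)" "N (k + i) (k + j) = Re (P i j) - Re (Q i j)"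
    if "i < k" "j < k" for i j
    using that \<open>k \<le> n\<close> unfolding N_def P_def Q_def by (simp_all add: Mnk_blocks Mn_blocks)
  have PQ: "P j i = cnj (P i j)" "Q j i = Q i j" for i j
    unfolding P_def Q_def by (rule diag_conj_commute diag_congr_commute)+
  have "mtrace (2 * k) (mmul (2 * k) JN JN) = (\<Sum>a<2 * k. \<Sum>b<2 * k. JN a b * JN b a)"
    unfolding mtrace_def mmul_def by simp
  also have "\<dots> = (\<Sum>i<k. \<Sum>j<k. JN i j * JN j i + JN i (k + j) * JN (k + j) i
                      + JN (k + i) j * JN j (k + i) + JN (k + i) (k + j) * JN (k + j) (k + i))"
    by (simp only: sum_lessThan_double sum.distrib add.assoc)
  also have "\<dots> = (\<Sum>i<k. \<Sum>j<k. 2 * (cmod (Q i j))\<^sup>2 - 2 * (cmod (P i j))\<^sup>2)"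
  proof (intro sum.cong refl)
    fix i j assume "i \<in> {..<k}" "j \<in> {..<k}"
    then have ij: "i < k" "j < k" by auto
    have "JN i j * JN j i + JN i (k + j) * JN (k + j) i + JN (k + i) j * JN j (k + i) + JN (k + i) (k + j) * JN (k + j) (k + i)
      = (Im (P i j) + Im (Q i j)) * (Im (P j i) + Im (Q j i)) - (Re (P i j) - Re (Q i j)) * (Re (P j i) + Re (Q j i))
        - (Re (P i j) + Re (Q i j)) * (Re (P j i) - Re (Q j i)) + (Im (P i j) - Im (Q i j)) * (Im (P j i) - Im (Q j i))"
      by (simp only: JN[OF ij] JN[OF ij(2,1)] N[OF ij] N[OF ij(2,1)]) (simp add: algebra_simps)
    also have "\<dots> = 2 * (cmod (Q i j))\<^sup>2 - 2 * (cmod (P i j))\<^sup>2"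
      unfolding cmod_power2 by (simp add: PQ[of j i] power2_eq_square algebra_simps)
    finally show "JN i j * JN j i + JN i (k + j) * JN (k + j) i + JN (k + i) j * JN j (k + i) + JN (k + i) (k + j) * JN (k + j) (k + i)
      = 2 * (cmod (Q i j))\<^sup>2 - 2 * (cmod (P i j))\<^sup>2" .
  qed
  finally show ?thesis unfolding JN_def N_def .
qed

section \<open>The unitary group\<close>

lemma unitary_group_outside: "U \<in> unitary_group n \<Longrightarrow> \<not> (i < n \<and> j < n) \<Longrightarrow> U i j = 0"
  by (auto simp: unitary_group_def)

lemma unitary_columns_orthonormal:
  assumes "U \<in> unitary_group n" "j < n" "m < n"
  shows "(\<Sum>i<n. cnj (U i j) * U i m) = (if j = m then 1 else 0)"
proof -
  have "mmul n (ctrans U) U j m = idm n j m" using assms(1) by (simp add: unitary_group_def)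
  then show ?thesis using assms by (simp add: mmul_def ctrans_def idm_def)
qed

lemma unitary_columns_orthonormal':
  assumes "U \<in> unitary_group n" "j < n" "m < n"
  shows "(\<Sum>i<n. U i j * cnj (U i m)) = (if j = m then 1 else 0)"
  using arg_cong[OF unitary_columns_orthonormal[OF assms], of cnj] by (simp add: mult.commute)

lemma unitary_column_norm:
  assumes "U \<in> unitary_group n" "l < n"
  shows "(\<Sum>i<n. (cmod (U i l))\<^sup>2) = 1"
proof -
  have "complex_of_real (\<Sum>i<n. (cmod (U i l))\<^sup>2) = (\<Sum>i<n. cnj (U i l) * U i l)"
    unfolding of_real_sum by (intro sum.cong refl) (simp only: complex_norm_square mult.commute)
  then show ?thesis
    using unitary_columns_orthonormal[OF assms(1,2,2)] by (metis of_real_eq_1_iff)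
qed

lemma norm_unitary_entry_le:
  assumes "U \<in> unitary_group n"
  shows "cmod (U i l) \<le> 1"
proof (cases "i < n \<and> l < n")
  case True
  then have "(cmod (U i l))\<^sup>2 \<le> (\<Sum>i<n. (cmod (U i l))\<^sup>2)"
    by (intro member_le_sum) auto
  then have "(cmod (U i l))\<^sup>2 \<le> 1"
    using unitary_column_norm[OF assms] True by simp
  then show ?thesis by (simp add: power_le_one_iff)
qed (simp add: unitary_group_outside[OF assms])

lemma unitary_isometry:
  assumes "U \<in> unitary_group n"
  shows "(\<Sum>j<n. (cmod (\<Sum>l<n. a l * U j l))\<^sup>2) = (\<Sum>l<n. (cmod (a l))\<^sup>2)"
proof -
  have "complex_of_real (\<Sum>j<n. (cmod (\<Sum>l<n. a l * U j l))\<^sup>2)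
      = (\<Sum>j<n. (\<Sum>l<n. a l * U j l) * (\<Sum>m<n. cnj (a m) * cnj (U j m)))"
    by (simp only: of_real_sum complex_norm_square cnj_sum complex_cnj_mult)
  also have "\<dots> = (\<Sum>j<n. \<Sum>l<n. \<Sum>m<n. a l * cnj (a m) * (U j l * cnj (U j m)))"
    unfolding sum_product by (simp only: mult_ac)
  also have "\<dots> = (\<Sum>l<n. \<Sum>j<n. \<Sum>m<n. a l * cnj (a m) * (U j l * cnj (U j m)))"
    by (rule sum.swap)
  also have "\<dots> = (\<Sum>l<n. \<Sum>m<n. \<Sum>j<n. a l * cnj (a m) * (U j l * cnj (U j m)))"
    by (rule sum.cong[OF refl], rule sum.swap)
  also have "\<dots> = (\<Sum>l<n. \<Sum>m<n. a l * cnj (a m) * (\<Sum>j<n. U j l * cnj (U j m)))"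
    by (simp only: sum_distrib_left)
  also have "\<dots> = (\<Sum>l<n. \<Sum>m<n. if l = m then a l * cnj (a l) else 0)"
    by (intro sum.cong refl) (simp add: unitary_columns_orthonormal'[OF assms])
  also have "\<dots> = (\<Sum>l<n. a l * cnj (a l))"
    by simp
  also have "\<dots> = complex_of_real (\<Sum>l<n. (cmod (a l))\<^sup>2)"
    by (simp only: of_real_sum complex_norm_square)
  finally show ?thesis by (simp only: of_real_eq_iff)
qed

lemma unitary_isometry_cnj:
  assumes "U \<in> unitary_group n"
  shows "(\<Sum>j<n. (cmod (\<Sum>l<n. a l * cnj (U j l)))\<^sup>2) = (\<Sum>l<n. (cmod (a l))\<^sup>2)"
proof -
  have "(\<Sum>l<n. a l * cnj (U j l)) = cnj (\<Sum>l<n. cnj (a l) * U j l)" for j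
    by simp
  then have "cmod (\<Sum>l<n. a l * cnj (U j l)) = cmod (\<Sum>l<n. cnj (a l) * U j l)" for j
    by (simp only: complex_mod_cnj)
  then show ?thesis using unitary_isometry[OF assms, of "\<lambda>l. cnj (a l)"] by simp
qed

lemma continuous_on_matrix_entry [continuous_intros]:
  "continuous_on S (\<lambda>U :: nat \<Rightarrow> nat \<Rightarrow> 'a::topological_space. U i j)"
  using continuous_on_product_then_coordinatewise[OF continuous_on_product_then_coordinatewise[OF continuous_on_id]] .

lemma continuous_on_mmul_left: "continuous_on S (\<lambda>U. mmul n (V :: nat \<Rightarrow> nat \<Rightarrow> complex) U)"
proof (intro continuous_on_coordinatewise_then_product)
  fix i j
  show "continuous_on S (\<lambda>U. mmul n V U i j)"
  proof (cases "i < n \<and> j < n")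
    case True
    have "continuous_on S (\<lambda>U. \<Sum>l<n. V i l * U l j)" by (intro continuous_intros)
    then show ?thesis using True by (simp add: mmul_def)
  next
    case False
    then have "mmul n V U i j = 0" for U by (auto simp: mmul_def)
    then show ?thesis by simp
  qed
qed

lemma continuous_on_diag_conj [continuous_intros]: "continuous_on S (\<lambda>U. diag_conj n w U i j)"
  unfolding diag_conj_def by (intro continuous_intros)

lemma continuous_on_diag_congr [continuous_intros]: "continuous_on S (\<lambda>U. diag_congr n w U i j)"
  unfolding diag_congr_def by (intro continuous_intros)

lemma closed_unitary_group: "closed (unitary_group n)"
proof -
  define C where "C i j = {U :: nat \<Rightarrow> nat \<Rightarrow> complex. ((n \<le> i \<or> n \<le> j) \<longrightarrow> U i j = 0)
                            \<and> mmul n (ctrans U) U i j = idm n i j}" for i j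
  have "closed (C i j)" for i j
  proof (cases "n \<le> i \<or> n \<le> j")
    case True
    then have "C i j = {U. U i j = 0}" by (auto simp: C_def mmul_def idm_def)
    then show ?thesis by (simp only:) (rule closed_Collect_eq; intro continuous_intros)
  next
    case False
    then have "C i j = {U. (\<Sum>l<n. cnj (U l i) * U l j) = idm n i j}"
      by (auto simp: C_def mmul_def ctrans_def)
    then show ?thesis by (simp only:) (rule closed_Collect_eq; intro continuous_intros)
  qed
  moreover have "U \<in> unitary_group n \<longleftrightarrow> (\<forall>i j. U \<in> C i j)" for U
    unfolding unitary_group_def C_def fun_eq_iff by blast
  then have "unitary_group n = (\<Inter>i. \<Inter>j. C i j)" by blast
  ultimately show ?thesis by (simp add: closed_INT)
qed

lemma compact_unitary_group: "compact (unitary_group n)"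
proof -
  have row: "compact (PiE UNIV (\<lambda>_::nat. cball (0::complex) 1))"
    using compactin_PiE[of "\<lambda>_. euclidean" UNIV "\<lambda>_. cball (0::complex) 1"]
    by (simp add: euclidean_product_topology compactin_euclidean_iff)
  define B where "B = PiE UNIV (\<lambda>_::nat. PiE UNIV (\<lambda>_::nat. cball (0::complex) 1))"
  have "compact B"
    using compactin_PiE[of "\<lambda>_. euclidean" UNIV "\<lambda>_. PiE UNIV (\<lambda>_::nat. cball (0::complex) 1)"] row
    by (simp add: B_def euclidean_product_topology compactin_euclidean_iff)
  then have "compact (B \<inter> unitary_group n)"
    using closed_unitary_group by (rule compact_Int_closed)
  moreover have "unitary_group n \<subseteq> B"
    using norm_unitary_entry_le by (auto simp: B_def PiE_UNIV_domain)
  ultimately show ?thesis by (simp add: Int_absorb1)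
qed

lemma trace_diag_conj:
  assumes "U \<in> unitary_group n"
  shows "(\<Sum>i<n. Re (diag_conj n w U i i)) = (\<Sum>l<n. w l)"
proof -
  have "Re (diag_conj n w U i i) = (\<Sum>l<n. w l * (cmod (U i l))\<^sup>2)" for i
    unfolding diag_conj_def cmod_power2 by (simp add: Re_sum power2_eq_square algebra_simps)
  then have "(\<Sum>i<n. Re (diag_conj n w U i i)) = (\<Sum>i<n. \<Sum>l<n. w l * (cmod (U i l))\<^sup>2)"
    by simp
  also have "\<dots> = (\<Sum>l<n. w l * (\<Sum>i<n. (cmod (U i l))\<^sup>2))"
    by (subst sum.swap) (simp add: sum_distrib_left)
  finally show ?thesis by (simp add: unitary_column_norm[OF assms])
qed

lemma frobenius_diag_conj:
  assumes "U \<in> unitary_group n"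
  shows "(\<Sum>i<n. \<Sum>j<n. (cmod (diag_conj n w U i j))\<^sup>2) = (\<Sum>l<n. (w l)\<^sup>2)"
proof -
  have "(\<Sum>j<n. (cmod (diag_conj n w U i j))\<^sup>2) = (\<Sum>l<n. (w l)\<^sup>2 * (cmod (U i l))\<^sup>2)" for i
    using unitary_isometry_cnj[OF assms, of "\<lambda>l. complex_of_real (w l) * U i l"]
    by (simp add: diag_conj_def norm_mult power_mult_distrib)
  then have "(\<Sum>i<n. \<Sum>j<n. (cmod (diag_conj n w U i j))\<^sup>2) = (\<Sum>i<n. \<Sum>l<n. (w l)\<^sup>2 * (cmod (U i l))\<^sup>2)"
    by simp
  also have "\<dots> = (\<Sum>l<n. (w l)\<^sup>2 * (\<Sum>i<n. (cmod (U i l))\<^sup>2))"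
    by (subst sum.swap) (simp add: sum_distrib_left)
  finally show ?thesis by (simp add: unitary_column_norm[OF assms])
qed

lemma frobenius_diag_congr:
  assumes "U \<in> unitary_group n"
  shows "(\<Sum>i<n. \<Sum>j<n. (cmod (diag_congr n w U i j))\<^sup>2) = (\<Sum>l<n. (w l)\<^sup>2)"
proof -
  have "(\<Sum>j<n. (cmod (diag_congr n w U i j))\<^sup>2) = (\<Sum>l<n. (w l)\<^sup>2 * (cmod (U i l))\<^sup>2)" for i
    using unitary_isometry[OF assms, of "\<lambda>l. complex_of_real (w l) * U i l"]
    by (simp add: diag_congr_def norm_mult power_mult_distrib)
  then have "(\<Sum>i<n. \<Sum>j<n. (cmod (diag_congr n w U i j))\<^sup>2) = (\<Sum>i<n. \<Sum>l<n. (w l)\<^sup>2 * (cmod (U i l))\<^sup>2)"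
    by simp
  also have "\<dots> = (\<Sum>l<n. (w l)\<^sup>2 * (\<Sum>i<n. (cmod (U i l))\<^sup>2))"
    by (subst sum.swap) (simp add: sum_distrib_left)
  finally show ?thesis by (simp add: unitary_column_norm[OF assms])
qed

section \<open>Unitary row operations\<close>

definition row_op :: "nat \<Rightarrow> nat \<Rightarrow> nat \<Rightarrow> complex \<Rightarrow> complex \<Rightarrow> complex \<Rightarrow> complex \<Rightarrow> nat \<Rightarrow> nat \<Rightarrow> complex" where
  "row_op n p q a b c d = (\<lambda>i m. if i < n \<and> m < n then
     (if i = p then (if m = p then a else if m = q then b else 0)
      else if i = q then (if m = p then c else if m = q then d else 0)
      else if i = m then 1 else 0) else 0)"

lemma mmul_row_op:
  assumes "p < n" "q < n" "p \<noteq> q" "i < n" "l < n"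
  shows "mmul n (row_op n p q a b c d) U i l =
    (if i = p then a * U p l + b * U q l else if i = q then c * U p l + d * U q l else U i l)"
proof -
  have "mmul n (row_op n p q a b c d) U i l = (\<Sum>m<n. (if m = p then (if i = p then a else if i = q then c else 0) * U p l else 0)
       + (if m = q then (if i = p then b else if i = q then d else 0) * U q l else 0)
       + (if m = i \<and> i \<noteq> p \<and> i \<noteq> q then U i l else 0))"
    using assms unfolding mmul_def by (auto simp: row_op_def intro!: sum.cong)
  also have "\<dots> = (if i = p then a * U p l + b * U q l else if i = q then c * U p l + d * U q l else U i l)"
    using assms by (simp add: sum.distrib)
  finally show ?thesis .
qed

lemma row_op_unitary:
  assumes pq: "p < n" "q < n" "p \<noteq> q"
    and "cnj a * a + cnj c * c = 1" "cnj b * b + cnj d * d = 1" "cnj a * b + cnj c * d = 0"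
  shows "row_op n p q a b c d \<in> unitary_group n"
proof -
  let ?G = "row_op n p q a b c d"
  have "cnj b * a + cnj d * c = 0"
    using arg_cong[OF \<open>cnj a * b + cnj c * d = 0\<close>, of cnj] by (simp add: mult.commute)
  have "mmul n (ctrans ?G) ?G j m = idm n j m" if "j < n" "m < n" for j m
  proof -
    have "mmul n (ctrans ?G) ?G j m = (\<Sum>i<n. (if i = p then cnj (?G p j) * ?G p m else 0)
        + (if i = q then cnj (?G q j) * ?G q m else 0)
        + (if i = j then (if j = m \<and> j \<noteq> p \<and> j \<noteq> q then 1 else 0) else 0))"
      using that pq unfolding mmul_def ctrans_def by (auto simp: row_op_def intro!: sum.cong)
    also have "\<dots> = idm n j m"
      using that assms \<open>cnj b * a + cnj d * c = 0\<close> by (auto simp: sum.distrib row_op_def idm_def)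
    finally show ?thesis .
  qed
  then have "mmul n (ctrans ?G) ?G = idm n"
    by (auto simp: fun_eq_iff mmul_def idm_def)
  then show ?thesis by (auto simp: unitary_group_def row_op_def)
qed

lemma diag_conj_row_combination:
  assumes "\<And>l. l < n \<Longrightarrow> V i l = \<alpha> * U p l + \<beta> * U q l"
    "\<And>l. l < n \<Longrightarrow> V j l = \<gamma> * U p l + \<delta> * U q l"
  shows "diag_conj n w V i j = \<alpha> * cnj \<gamma> * diag_conj n w U p p + \<alpha> * cnj \<delta> * diag_conj n w U p q
     + \<beta> * cnj \<gamma> * diag_conj n w U q p + \<beta> * cnj \<delta> * diag_conj n w U q q"
  unfolding diag_conj_def sum_distrib_left sum.distrib[symmetric]
  by (intro sum.cong refl) (simp add: assms algebra_simps)

lemma diag_congr_row_combination: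
  assumes "\<And>l. l < n \<Longrightarrow> V i l = \<alpha> * U p l + \<beta> * U q l"
    "\<And>l. l < n \<Longrightarrow> V j l = \<gamma> * U p l + \<delta> * U q l"
  shows "diag_congr n w V i j = \<alpha> * \<gamma> * diag_congr n w U p p + \<alpha> * \<delta> * diag_congr n w U p q
     + \<beta> * \<gamma> * diag_congr n w U q p + \<beta> * \<delta> * diag_congr n w U q q"
  unfolding diag_congr_def sum_distrib_left sum.distrib[symmetric]
  by (intro sum.cong refl) (simp add: assms algebra_simps)

lemma diag_forms_swap_rows:
  assumes "p < n" "q < n" "p \<noteq> q" "i < n" "j < n"
  shows "diag_conj n w (mmul n (row_op n p q 0 1 1 0) U) i j = diag_conj n w U (Transposition.transpose p q i) (Transposition.transpose p q j)"
    "diag_congr n w (mmul n (row_op n p q 0 1 1 0) U) i j = diag_congr n w U (Transposition.transpose p q i) (Transposition.transpose p q j)"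
  using assms unfolding diag_conj_def diag_congr_def
  by (auto simp: mmul_row_op Transposition.transpose_def intro!: sum.cong)

lemma swap_rows_unitary: "p < n \<Longrightarrow> q < n \<Longrightarrow> p \<noteq> q \<Longrightarrow> row_op n p q 0 1 1 0 \<in> unitary_group n"
  by (rule row_op_unitary) auto

lemma phase_row_unitary: "p < n \<Longrightarrow> q < n \<Longrightarrow> p \<noteq> q \<Longrightarrow> row_op n p q \<i> 0 0 1 \<in> unitary_group n"
  by (rule row_op_unitary) auto

lemma diag_forms_phase_row:
  assumes "p < n" "q < n" "p \<noteq> q"
  shows "Re (diag_conj n w (mmul n (row_op n p q \<i> 0 0 1) U) p q) = - Im (diag_conj n w U p q)"
    "diag_congr n w (mmul n (row_op n p q \<i> 0 0 1) U) p p = - diag_congr n w U p p"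
    "diag_congr n w (mmul n (row_op n p q \<i> 0 0 1) U) q q = diag_congr n w U q q"
proof -
  note rows = mmul_row_op[OF assms _ _, of _ _ \<i> 0 0 1 U]
  show "Re (diag_conj n w (mmul n (row_op n p q \<i> 0 0 1) U) p q) = - Im (diag_conj n w U p q)"
    by (subst diag_conj_row_combination[where \<alpha> = \<i> and \<beta> = 0 and \<gamma> = 0 and \<delta> = 1])
      (use assms rows in auto)
  show "diag_congr n w (mmul n (row_op n p q \<i> 0 0 1) U) p p = - diag_congr n w U p p"
    by (subst diag_congr_row_combination[where \<alpha> = \<i> and \<beta> = 0 and \<gamma> = \<i> and \<delta> = 0])
      (use assms rows in auto)
  show "diag_congr n w (mmul n (row_op n p q \<i> 0 0 1) U) q q = diag_congr n w U q q"
    by (subst diag_congr_row_combination[where \<alpha> = 0 and \<beta> = 1 and \<gamma> = 0 and \<delta> = 1])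
      (use assms rows in auto)
qed

definition rotation_op :: "nat \<Rightarrow> nat \<Rightarrow> nat \<Rightarrow> real \<Rightarrow> nat \<Rightarrow> nat \<Rightarrow> complex" where
  "rotation_op n p q s = (let c = sqrt (1 / 2) in
     row_op n p q (complex_of_real c) (complex_of_real (s * c)) (complex_of_real (- s * c)) (complex_of_real c))"

lemma sqrt_half_squared: "complex_of_real (sqrt (1 / 2)) * complex_of_real (sqrt (1 / 2)) = 1 / 2"
  by (simp flip: of_real_mult)

lemma rotation_op_unitary:
  assumes "p < n" "q < n" "p \<noteq> q" "s\<^sup>2 = 1"
  shows "rotation_op n p q s \<in> unitary_group n"
proof -
  have "complex_of_real s * complex_of_real s = 1"
    using assms(4) by (simp add: power2_eq_square flip: of_real_mult)
  then show ?thesis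
    unfolding rotation_op_def Let_def
    by (intro row_op_unitary) (use assms in \<open>simp_all add: algebra_simps sqrt_half_squared\<close>)
qed

lemma diag_forms_rotation:
  assumes "p < n" "q < n" "p \<noteq> q" "s\<^sup>2 = 1"
  shows "Re (diag_conj n w (mmul n (rotation_op n p q s) U) p p)
           = (Re (diag_conj n w U p p) + Re (diag_conj n w U q q)) / 2 + s * Re (diag_conj n w U p q)"
    "diag_congr n w (mmul n (rotation_op n p q s) U) p p
           = (diag_congr n w U p p + diag_congr n w U q q) / 2 + s * diag_congr n w U p q"
proof -
  define c where "c = complex_of_real (sqrt (1 / 2))"
  have rot: "rotation_op n p q s = row_op n p q c (s * c) (- s * c) c"
    by (simp add: rotation_op_def c_def Let_def)
  have cc: "c * c = 1 / 2" "cnj c = c" by (simp_all add: c_def sqrt_half_squared)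
  then have ccx: "c * (c * x) = x / 2" for x by (simp flip: mult.assoc)
  have ss: "complex_of_real s * complex_of_real s = 1"
    using assms(4) by (simp add: power2_eq_square flip: of_real_mult)
  note rows = mmul_row_op[OF assms(1-3) _ _, of _ _ c "s * c" "- s * c" c U, folded rot]
  have P: "diag_conj n w (mmul n (rotation_op n p q s) U) p p
      = c * cnj c * diag_conj n w U p p + c * cnj (s * c) * diag_conj n w U p q
        + s * c * cnj c * diag_conj n w U q p + s * c * cnj (s * c) * diag_conj n w U q q"
    by (rule diag_conj_row_combination) (use assms rows in auto)
  also have "\<dots> = (diag_conj n w U p p + diag_conj n w U q q) / 2
                    + s * (diag_conj n w U p q + cnj (diag_conj n w U p q)) / 2"
    by (simp add: cc ccx ss diag_conj_commute[of n w U q p] algebra_simps add_divide_distrib)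
  finally show "Re (diag_conj n w (mmul n (rotation_op n p q s) U) p p)
           = (Re (diag_conj n w U p p) + Re (diag_conj n w U q q)) / 2 + s * Re (diag_conj n w U p q)"
    by simp
  have Q: "diag_congr n w (mmul n (rotation_op n p q s) U) p p
      = c * c * diag_congr n w U p p + c * (s * c) * diag_congr n w U p q
        + s * c * c * diag_congr n w U q p + s * c * (s * c) * diag_congr n w U q q"
    by (rule diag_congr_row_combination) (use assms rows in auto)
  then show "diag_congr n w (mmul n (rotation_op n p q s) U) p p
           = (diag_congr n w U p p + diag_congr n w U q q) / 2 + s * diag_congr n w U p q"
    by (simp add: cc ccx ss diag_congr_commute[of n w U q p] algebra_simps)
qed

section \<open>Second moments under Haar measure\<close>

lemma transposition_invariant_kernel:
  fixes E :: "nat \<Rightarrow> nat \<Rightarrow> 'a"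
  assumes inv: "\<And>p q i j. p < n \<Longrightarrow> q < n \<Longrightarrow> p \<noteq> q \<Longrightarrow> i < n \<Longrightarrow> j < n \<Longrightarrow>
      E (Transposition.transpose p q i) (Transposition.transpose p q j) = E i j"
    and "2 \<le> n" "i < n" "j < n"
  shows "E i j = (if i = j then E 0 0 else E 0 1)"
proof -
  have to_0: "E 0 (Transposition.transpose 0 i j) = E i j" if "0 < i" "i < n" "j < n" for i j
  proof -
    have "E (Transposition.transpose 0 i i) (Transposition.transpose 0 i j) = E i j"
      using that by (intro inv) auto
    then show ?thesis by simp
  qed
  have to_1: "E 0 1 = E 0 j" if "0 < j" "j < n" for j
  proof (cases "j = 1")
    case False
    have "E (Transposition.transpose 1 j 0) (Transposition.transpose 1 j j) = E 0 j"
      using that False \<open>2 \<le> n\<close> by (intro inv) auto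
    then show ?thesis using False that by simp
  qed simp
  show ?thesis
  proof (cases "i = j")
    case True
    then show ?thesis using to_0[of i i] \<open>i < n\<close> by (cases "i = 0") simp_all
  next
    case False
    define j' where "j' = (if i = 0 then j else Transposition.transpose 0 i j)"
    have "E 0 j' = E i j" "0 < j'" "j' < n"
      using to_0[of i j] False \<open>i < n\<close> \<open>j < n\<close> by (auto simp: j'_def Transposition.transpose_def)
    then show ?thesis using to_1[of j'] False by simp
  qed
qed

lemma sum_sum_if_eq:
  "(\<Sum>i<m. \<Sum>j<m. if i = j then x else y) = real m * x + (real m * real m - real m) * (y::real)"
proof -
  have "(\<Sum>j<m. if i = j then x else y) = x + (real m - 1) * y" if "i < m" for i
  proof -
    have "(\<Sum>j<m. if i = j then x else y) = (\<Sum>j<m. (if i = j then x - y else 0) + y)"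
      by (intro sum.cong refl) auto
    then show ?thesis using that by (simp add: sum.distrib algebra_simps)
  qed
  then have "(\<Sum>i<m. \<Sum>j<m. if i = j then x else y) = (\<Sum>i<m. x + (real m - 1) * y)"
    by (intro sum.cong refl) auto
  then show ?thesis by (simp add: algebra_simps)
qed

lemma moment_denominators_nonzero:
  assumes "2 \<le> n"
  shows "real n * (real n + 1) \<noteq> 0" "real n * ((real n)\<^sup>2 - 1) \<noteq> 0"
proof -
  have "1 < (real n)\<^sup>2"
    using assms by (intro one_less_power) auto
  then have "(real n)\<^sup>2 - 1 \<noteq> 0" by linarith
  then show "real n * (real n + 1) \<noteq> 0" "real n * ((real n)\<^sup>2 - 1) \<noteq> 0"
    using assms by simp_all
qed

locale haar_unitary_space =
  fixes n :: nat and \<mu> :: "(nat \<Rightarrow> nat \<Rightarrow> complex) measure"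
  assumes haar: "haar_unitary n \<mu>"
begin

sublocale prob_space \<mu>
  using haar by (simp add: haar_unitary_def)

lemma sets_eq_borel: "sets \<mu> = sets borel"
  using haar by (simp add: haar_unitary_def)

lemma AE_unitary_group: "AE U in \<mu>. U \<in> unitary_group n"
proof -
  have "prob (unitary_group n) = 1"
    using haar by (simp add: haar_unitary_def measure_def)
  then show ?thesis by (rule AE_prob_1)
qed

lemma borel_measurable_continuous: "continuous_on UNIV f \<Longrightarrow> f \<in> borel_measurable \<mu>"
  using borel_measurable_continuous_onI measurable_cong_sets[OF sets_eq_borel refl] by blast

lemma integrable_continuous:
  fixes f :: "(nat \<Rightarrow> nat \<Rightarrow> complex) \<Rightarrow> real"
  assumes "continuous_on UNIV f"
  shows "integrable \<mu> f"
proof -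
  have "compact (f ` unitary_group n)"
    using assms by (intro compact_continuous_image compact_unitary_group) (rule continuous_on_subset, auto)
  then obtain B where "\<forall>U\<in>unitary_group n. norm (f U) \<le> B"
    by (auto dest!: compact_imp_bounded simp: bounded_iff)
  with AE_unitary_group have "AE U in \<mu>. norm (f U) \<le> B" by auto
  then show ?thesis
    using assms by (intro integrable_const_bound borel_measurable_continuous)
qed

lemma integral_eq_on_unitary_group:
  fixes f :: "(nat \<Rightarrow> nat \<Rightarrow> complex) \<Rightarrow> real"
  assumes "continuous_on UNIV f" "\<And>U. U \<in> unitary_group n \<Longrightarrow> f U = c"
  shows "integral\<^sup>L \<mu> f = c"
proof -
  have "integral\<^sup>L \<mu> f = integral\<^sup>L \<mu> (\<lambda>_. c)"
    using AE_unitary_group assms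
    by (intro integral_cong_AE borel_measurable_continuous) auto
  then show ?thesis by (simp add: prob_space)
qed

lemma integral_mmul_left:
  fixes f :: "(nat \<Rightarrow> nat \<Rightarrow> complex) \<Rightarrow> real"
  assumes "V \<in> unitary_group n" "continuous_on UNIV f"
  shows "(\<integral>U. f (mmul n V U) \<partial>\<mu>) = integral\<^sup>L \<mu> f"
proof -
  have "distr \<mu> borel (mmul n V) = \<mu>" using haar assms(1) by (simp add: haar_unitary_def)
  moreover have "mmul n V \<in> measurable \<mu> borel"
    using borel_measurable_continuous_onI[OF continuous_on_mmul_left]
      measurable_cong_sets[OF sets_eq_borel refl] by blast
  ultimately show ?thesis
    using integral_distr[of "mmul n V" \<mu> borel f] borel_measurable_continuous_onI[OF assms(2)] by simp
qed

definition conj_moment :: "(nat \<Rightarrow> real) \<Rightarrow> nat \<Rightarrow> nat \<Rightarrow> real" where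
  "conj_moment w i j = (\<integral>U. (cmod (diag_conj n w U i j))\<^sup>2 \<partial>\<mu>)"

definition congr_moment :: "(nat \<Rightarrow> real) \<Rightarrow> nat \<Rightarrow> nat \<Rightarrow> real" where
  "congr_moment w i j = (\<integral>U. (cmod (diag_congr n w U i j))\<^sup>2 \<partial>\<mu>)"

lemma moments_transpose:
  assumes "p < n" "q < n" "p \<noteq> q" "i < n" "j < n"
  shows "conj_moment w (Transposition.transpose p q i) (Transposition.transpose p q j) = conj_moment w i j"
    "congr_moment w (Transposition.transpose p q i) (Transposition.transpose p q j) = congr_moment w i j"
  unfolding conj_moment_def congr_moment_def
  using integral_mmul_left[OF swap_rows_unitary[OF assms(1-3)], of "\<lambda>U. (cmod (diag_conj n w U i j))\<^sup>2"]
    integral_mmul_left[OF swap_rows_unitary[OF assms(1-3)], of "\<lambda>U. (cmod (diag_congr n w U i j))\<^sup>2"]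
  by (simp_all add: assms diag_forms_swap_rows continuous_intros)

lemma conj_moment_cross:
  assumes pq: "p < n" "q < n" "p \<noteq> q"
  shows "2 * conj_moment w p p = (conj_moment w p p + conj_moment w q q) / 2
           + (\<integral>U. Re (diag_conj n w U p p) * Re (diag_conj n w U q q) \<partial>\<mu>) + conj_moment w p q"
proof -
  define D where "D U = Re (diag_conj n w U p p)" for U
  define E where "E U = Re (diag_conj n w U q q)" for U
  define X where "X U = Re (diag_conj n w U p q)" for U
  define Y where "Y U = Im (diag_conj n w U p q)" for U
  have cont: "continuous_on UNIV D" "continuous_on UNIV E" "continuous_on UNIV X" "continuous_on UNIV Y"
    unfolding D_def E_def X_def Y_def by (intro continuous_intros)+
  have rot: "(\<integral>U. ((D U + E U) / 2 + s * X U)\<^sup>2 \<partial>\<mu>) = (\<integral>U. (D U)\<^sup>2 \<partial>\<mu>)" if "s\<^sup>2 = 1" for s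
    using integral_mmul_left[OF rotation_op_unitary[OF pq that], of "\<lambda>U. (D U)\<^sup>2"]
    by (simp add: D_def E_def X_def diag_forms_rotation[OF pq that] continuous_intros)
  have phase: "(\<integral>U. (Y U)\<^sup>2 \<partial>\<mu>) = (\<integral>U. (X U)\<^sup>2 \<partial>\<mu>)"
    using integral_mmul_left[OF phase_row_unitary[OF pq], of "\<lambda>U. (X U)\<^sup>2"]
    by (simp add: X_def Y_def diag_forms_phase_row[OF pq] continuous_intros)
  have "2 * (\<integral>U. (D U)\<^sup>2 \<partial>\<mu>)
      = (\<integral>U. ((D U + E U) / 2 + X U)\<^sup>2 + ((D U + E U) / 2 + (- 1) * X U)\<^sup>2 \<partial>\<mu>)"
    using rot[of 1] rot[of "- 1"] cont by (simp add: integrable_continuous continuous_intros)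
  also have "\<dots> = (\<integral>U. (D U)\<^sup>2 / 2 + (E U)\<^sup>2 / 2 + D U * E U + 2 * (X U)\<^sup>2 \<partial>\<mu>)"
    by (intro Bochner_Integration.integral_cong refl) (simp add: power2_eq_square field_simps)
  also have "\<dots> = ((\<integral>U. (D U)\<^sup>2 \<partial>\<mu>) + (\<integral>U. (E U)\<^sup>2 \<partial>\<mu>)) / 2 + (\<integral>U. D U * E U \<partial>\<mu>)
                   + ((\<integral>U. (X U)\<^sup>2 \<partial>\<mu>) + (\<integral>U. (Y U)\<^sup>2 \<partial>\<mu>))"
    using cont phase by (simp add: integrable_continuous continuous_intros)
  finally show ?thesis
    unfolding conj_moment_def cmod_power2 D_def E_def X_def Y_def
    by (simp add: integrable_continuous continuous_intros)
qed

lemma congr_moment_diag: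
  assumes pq: "p < n" "q < n" "p \<noteq> q"
  shows "congr_moment w p p = 2 * congr_moment w p q"
proof -
  define A where "A U = diag_congr n w U p p" for U
  define B where "B U = diag_congr n w U p q" for U
  define C where "C U = diag_congr n w U q q" for U
  have cont: "continuous_on UNIV A" "continuous_on UNIV B" "continuous_on UNIV C"
    unfolding A_def B_def C_def by (intro continuous_intros)+
  have rot: "(\<integral>U. (cmod ((A U + C U) / 2 + complex_of_real s * B U))\<^sup>2 \<partial>\<mu>) = (\<integral>U. (cmod (A U))\<^sup>2 \<partial>\<mu>)"
    if "s\<^sup>2 = 1" for s :: real
    using integral_mmul_left[OF rotation_op_unitary[OF pq that], of "\<lambda>U. (cmod (A U))\<^sup>2"]
    by (simp add: A_def B_def C_def diag_forms_rotation[OF pq that] continuous_intros)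
  have "(\<integral>U. Re (- A U * cnj (C U)) \<partial>\<mu>) = (\<integral>U. Re (A U * cnj (C U)) \<partial>\<mu>)"
    using integral_mmul_left[OF phase_row_unitary[OF pq], of "\<lambda>U. Re (A U * cnj (C U))"]
    by (simp add: A_def C_def diag_forms_phase_row[OF pq] continuous_intros)
  then have "- (\<integral>U. Re (A U * cnj (C U)) \<partial>\<mu>) = (\<integral>U. Re (A U * cnj (C U)) \<partial>\<mu>)"
    by (simp only: mult_minus_left uminus_complex.sel Bochner_Integration.integral_minus)
  then have phase: "(\<integral>U. Re (A U * cnj (C U)) \<partial>\<mu>) = 0" by linarith
  have "2 * (\<integral>U. (cmod (A U))\<^sup>2 \<partial>\<mu>)
      = (\<integral>U. (cmod ((A U + C U) / 2 + 1 * B U))\<^sup>2 + (cmod ((A U + C U) / 2 + (- 1) * B U))\<^sup>2 \<partial>\<mu>)"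
    using rot[of 1] rot[of "- 1"] cont by (simp add: integrable_continuous continuous_intros)
  also have "\<dots> = (\<integral>U. (cmod (A U))\<^sup>2 / 2 + (cmod (C U))\<^sup>2 / 2 + Re (A U * cnj (C U)) + 2 * (cmod (B U))\<^sup>2 \<partial>\<mu>)"
    by (intro Bochner_Integration.integral_cong refl)
      (simp only: cmod_power2, simp add: power2_eq_square field_simps)
  also have "\<dots> = ((\<integral>U. (cmod (A U))\<^sup>2 \<partial>\<mu>) + (\<integral>U. (cmod (C U))\<^sup>2 \<partial>\<mu>)) / 2
                   + 2 * (\<integral>U. (cmod (B U))\<^sup>2 \<partial>\<mu>)"
    using cont phase by (simp add: integrable_continuous continuous_intros)
  finally have "2 * congr_moment w p p = (congr_moment w p p + congr_moment w q q) / 2 + 2 * congr_moment w p q"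
    unfolding congr_moment_def A_def B_def C_def .
  moreover have "congr_moment w q q = congr_moment w p p"
    using moments_transpose(2)[OF pq pq(1,1), of w] by simp
  ultimately show ?thesis by simp
qed

lemma conj_moment_eq:
  assumes "2 \<le> n" "i < n" "j < n"
  shows "conj_moment w i j =
    (if i = j then ((\<Sum>l<n. w l)\<^sup>2 + (\<Sum>l<n. (w l)\<^sup>2)) / (real n * (real n + 1))
     else (real n * (\<Sum>l<n. (w l)\<^sup>2) - (\<Sum>l<n. w l)\<^sup>2) / (real n * ((real n)\<^sup>2 - 1)))"
proof -
  define \<alpha> where "\<alpha> = conj_moment w 0 0"
  define \<beta> where "\<beta> = conj_moment w 0 1"
  define T where "T = (\<Sum>l<n. w l)"
  define S where "S = (\<Sum>l<n. (w l)\<^sup>2)"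
  have cm: "conj_moment w i j = (if i = j then \<alpha> else \<beta>)" if "i < n" "j < n" for i j
    unfolding \<alpha>_def \<beta>_def
    by (rule transposition_invariant_kernel[where E = "conj_moment w", OF moments_transpose(1) \<open>2 \<le> n\<close> that])
  have cross: "(\<integral>U. Re (diag_conj n w U i i) * Re (diag_conj n w U j j) \<partial>\<mu>) = (if i = j then \<alpha> else \<alpha> - \<beta>)"
    if "i < n" "j < n" for i j
  proof (cases "i = j")
    case True
    then show ?thesis
      using cm[OF that] unfolding conj_moment_def cmod_power2 by (simp add: power2_eq_square)
  next
    case False
    then show ?thesis
      using conj_moment_cross[OF that False, of w] cm[OF that] cm[OF that(1,1)] cm[OF that(2,2)] by simp
  qed
  have "T\<^sup>2 = (\<integral>U. (\<Sum>i<n. Re (diag_conj n w U i i))\<^sup>2 \<partial>\<mu>)"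
    by (rule integral_eq_on_unitary_group[symmetric]) (simp_all add: T_def trace_diag_conj continuous_intros)
  also have "\<dots> = (\<Sum>i<n. \<Sum>j<n. (\<integral>U. Re (diag_conj n w U i i) * Re (diag_conj n w U j j) \<partial>\<mu>))"
    by (simp add: power2_eq_square sum_product integrable_continuous continuous_intros)
  also have "\<dots> = (\<Sum>i<n. \<Sum>j<n. if i = j then \<alpha> else \<alpha> - \<beta>)"
    by (intro sum.cong refl) (simp add: cross)
  finally have T2: "T\<^sup>2 = real n * \<alpha> + (real n * real n - real n) * (\<alpha> - \<beta>)"
    by (simp add: sum_sum_if_eq)
  have "S = (\<integral>U. (\<Sum>i<n. \<Sum>j<n. (cmod (diag_conj n w U i j))\<^sup>2) \<partial>\<mu>)"
    by (rule integral_eq_on_unitary_group[symmetric]) (simp_all add: S_def frobenius_diag_conj continuous_intros)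
  also have "\<dots> = (\<Sum>i<n. \<Sum>j<n. conj_moment w i j)"
    by (simp add: conj_moment_def integrable_continuous continuous_intros)
  also have "\<dots> = (\<Sum>i<n. \<Sum>j<n. if i = j then \<alpha> else \<beta>)"
    by (intro sum.cong refl) (simp add: cm)
  finally have S: "S = real n * \<alpha> + (real n * real n - real n) * \<beta>"
    by (simp add: sum_sum_if_eq)
  have "real n * (real n + 1) * \<alpha> = T\<^sup>2 + S"
    using T2 S by (simp add: algebra_simps)
  moreover have "real n * ((real n)\<^sup>2 - 1) * \<beta> = real n * S - T\<^sup>2"
  proof -
    have "real n * S = real n * (real n * \<alpha> + (real n * real n - real n) * \<beta>)"
      using S by simp
    then show ?thesis using T2 by (simp add: power2_eq_square algebra_simps)
  qed
  ultimately show ?thesis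
    using cm[OF assms(2,3)] moment_denominators_nonzero[OF \<open>2 \<le> n\<close>]
    unfolding T_def S_def by (simp add: field_simps)
qed

lemma congr_moment_eq:
  assumes "2 \<le> n" "i < n" "j < n"
  shows "congr_moment w i j = (if i = j then 2 else 1) * (\<Sum>l<n. (w l)\<^sup>2) / (real n * (real n + 1))"
proof -
  define \<gamma> where "\<gamma> = congr_moment w 0 1"
  have cm: "congr_moment w i j = (if i = j then 2 * \<gamma> else \<gamma>)" if "i < n" "j < n" for i j
    using transposition_invariant_kernel[where E = "congr_moment w", OF moments_transpose(2) \<open>2 \<le> n\<close> that]
      congr_moment_diag[of 0 1 w] \<open>2 \<le> n\<close> unfolding \<gamma>_def by simp
  have "(\<Sum>l<n. (w l)\<^sup>2) = (\<integral>U. (\<Sum>i<n. \<Sum>j<n. (cmod (diag_congr n w U i j))\<^sup>2) \<partial>\<mu>)"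
    by (rule integral_eq_on_unitary_group[symmetric]) (simp_all add: frobenius_diag_congr continuous_intros)
  also have "\<dots> = (\<Sum>i<n. \<Sum>j<n. congr_moment w i j)"
    by (simp add: congr_moment_def integrable_continuous continuous_intros)
  also have "\<dots> = (\<Sum>i<n. \<Sum>j<n. if i = j then 2 * \<gamma> else \<gamma>)"
    by (intro sum.cong refl) (simp add: cm)
  finally have "(\<Sum>l<n. (w l)\<^sup>2) = real n * (real n + 1) * \<gamma>"
    by (simp add: sum_sum_if_eq algebra_simps)
  then show ?thesis
    using cm[OF assms(2,3)] moment_denominators_nonzero[OF \<open>2 \<le> n\<close>] by (simp add: field_simps)
qed

lemma expected_trace_JM_squared:
  fixes z :: "nat \<Rightarrow> nat \<Rightarrow> real"
  assumes "2 \<le> n" "k \<le> n"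
  defines "T \<equiv> \<Sum>l<n. cosh_weight n z l"
    and "S \<equiv> \<Sum>l<n. (cosh_weight n z l)\<^sup>2" and "Sb \<equiv> \<Sum>l<n. (sinh_weight n z l)\<^sup>2"
  shows "(\<integral>U. mtrace (2 * k) (mmul (2 * k) (mmul (2 * k) (Jmat k) (Mnk n k z U))
                                         (mmul (2 * k) (Jmat k) (Mnk n k z U))) \<partial>\<mu>)
    = 2 * real k * (real k + 1) * Sb / (real n * (real n + 1))
      - 2 * real k * (T\<^sup>2 + S) / (real n * (real n + 1))
      - 2 * real k * (real k - 1) * (real n * S - T\<^sup>2) / (real n * ((real n)\<^sup>2 - 1))"
proof -
  define \<alpha> where "\<alpha> = (T\<^sup>2 + S) / (real n * (real n + 1))"
  define \<beta> where "\<beta> = (real n * S - T\<^sup>2) / (real n * ((real n)\<^sup>2 - 1))"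
  define \<gamma> where "\<gamma> = Sb / (real n * (real n + 1))"
  have "(\<integral>U. mtrace (2 * k) (mmul (2 * k) (mmul (2 * k) (Jmat k) (Mnk n k z U))
                                         (mmul (2 * k) (Jmat k) (Mnk n k z U))) \<partial>\<mu>)
      = (\<integral>U. (\<Sum>i<k. \<Sum>j<k. 2 * (cmod (diag_congr n (sinh_weight n z) U i j))\<^sup>2
                             - 2 * (cmod (diag_conj n (cosh_weight n z) U i j))\<^sup>2) \<partial>\<mu>)"
    by (simp add: trace_JM_squared[OF assms(2)])
  also have "\<dots> = (\<Sum>i<k. \<Sum>j<k. 2 * congr_moment (sinh_weight n z) i j - 2 * conj_moment (cosh_weight n z) i j)"
    by (simp add: congr_moment_def conj_moment_def integrable_continuous continuous_intros)
  also have "\<dots> = (\<Sum>i<k. \<Sum>j<k. if i = j then 2 * (2 * \<gamma>) - 2 * \<alpha> else 2 * \<gamma> - 2 * \<beta>)"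
    using assms(1,2)
    by (intro sum.cong refl) (simp add: congr_moment_eq conj_moment_eq \<alpha>_def \<beta>_def \<gamma>_def T_def S_def Sb_def)
  also have "\<dots> = 2 * real k * (real k + 1) * \<gamma> - 2 * real k * \<alpha> - 2 * real k * (real k - 1) * \<beta>"
    by (simp add: sum_sum_if_eq algebra_simps)
  also have "\<dots> = 2 * real k * (real k + 1) * Sb / (real n * (real n + 1))
      - 2 * real k * (T\<^sup>2 + S) / (real n * (real n + 1))
      - 2 * real k * (real k - 1) * (real n * S - T\<^sup>2) / (real n * ((real n)\<^sup>2 - 1))"
    by (simp add: \<alpha>_def \<beta>_def \<gamma>_def)
  finally show ?thesis .
qed

end

section \<open>Asymptotics\<close>

lemma trace_error_bound:
  fixes n k T S Sb :: real
  assumes n: "2 \<le> n" and k: "1 \<le> k" "k \<le> n" and CS: "T\<^sup>2 \<le> n * S" and Sb: "0 \<le> Sb" "Sb \<le> S"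
  shows "\<bar>2 * k * (k + 1) * Sb / (n * (n + 1)) - 2 * k * (T\<^sup>2 + S) / (n * (n + 1))
            - 2 * k * (k - 1) * (n * S - T\<^sup>2) / (n * (n\<^sup>2 - 1)) - (- 2 * k * (T / n)\<^sup>2)\<bar>
         \<le> 4 * k\<^sup>2 * S / n\<^sup>2"
proof -
  have n2: "n \<le> n\<^sup>2" "1 < n\<^sup>2"
    using mult_left_mono[of 1 n n] one_less_power[of n 2] n by (simp_all add: power2_eq_square)
  have pos: "0 < n" "0 < n + 1" "0 < n\<^sup>2 - 1" using n n2 by auto
  then have nz: "n \<noteq> 0" "n + 1 \<noteq> 0" by auto
  define A where "A = 2 * k * (k + 1) * Sb / (n * (n + 1))"
  define D1 where "D1 = 2 * k * (n * S - T\<^sup>2) / (n\<^sup>2 * (n + 1))"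
  define D2 where "D2 = 2 * k * (k - 1) * (n * S - T\<^sup>2) / (n * (n\<^sup>2 - 1))"
  have "2 * k * (T / n)\<^sup>2 = 2 * k * T\<^sup>2 * (n + 1) / (n\<^sup>2 * (n + 1))"
    using nz by (simp add: power_divide)
  moreover have "2 * k * (T\<^sup>2 + S) / (n * (n + 1)) = 2 * k * (T\<^sup>2 + S) * n / (n\<^sup>2 * (n + 1))"
    using nz by (simp add: power2_eq_square)
  ultimately have "2 * k * (T / n)\<^sup>2 - 2 * k * (T\<^sup>2 + S) / (n * (n + 1)) = - D1"
    unfolding D1_def by (simp add: divide_simps) (simp add: algebra_simps power2_eq_square)
  then have "2 * k * (k + 1) * Sb / (n * (n + 1)) - 2 * k * (T\<^sup>2 + S) / (n * (n + 1))
          - 2 * k * (k - 1) * (n * S - T\<^sup>2) / (n * (n\<^sup>2 - 1)) - (- 2 * k * (T / n)\<^sup>2) = A - (D1 + D2)"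
    unfolding A_def D2_def by linarith
  moreover have "0 \<le> A" "A \<le> 4 * k\<^sup>2 * S / n\<^sup>2"
  proof -
    show "0 \<le> A" unfolding A_def using k Sb pos by simp
    have "A \<le> 2 * k * (k + 1) * S / (n * (n + 1))"
      unfolding A_def using k Sb pos by (intro divide_right_mono mult_left_mono) auto
    also have "\<dots> \<le> (4 * k\<^sup>2 * S) / n\<^sup>2"
    proof (rule frac_le)
      have "(k + 1) * S \<le> (2 * k) * S"
        using k Sb by (intro mult_right_mono) auto
      then show "2 * k * (k + 1) * S \<le> 4 * k\<^sup>2 * S"
        using k mult_left_mono[of "(k + 1) * S" "2 * k * S" "2 * k"] by (simp add: power2_eq_square mult_ac)
    qed (use k Sb pos in \<open>auto simp: power2_eq_square\<close>)
    finally show "A \<le> 4 * k\<^sup>2 * S / n\<^sup>2" .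
  qed
  moreover have "0 \<le> D1 + D2" "D1 + D2 \<le> 4 * k\<^sup>2 * S / n\<^sup>2"
  proof -
    show "0 \<le> D1 + D2" unfolding D1_def D2_def using CS k pos by simp
    have "D1 \<le> 2 * k * (n * S) / (n\<^sup>2 * (n + 1))"
      unfolding D1_def using k pos by (intro divide_right_mono mult_left_mono) auto
    also have "\<dots> = 2 * k * S / (n * (n + 1))"
      using pos by (simp add: power2_eq_square)
    also have "\<dots> \<le> 2 * k * S / n\<^sup>2"
      using k Sb pos by (intro divide_left_mono) (auto simp: power2_eq_square)
    finally have D1: "D1 \<le> 2 * k * S / n\<^sup>2" .
    have "D2 \<le> 2 * k * (k - 1) * (n * S) / (n * (n\<^sup>2 - 1))"
      unfolding D2_def using k pos by (intro divide_right_mono mult_left_mono) auto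
    also have "\<dots> = 2 * k * S * ((k - 1) / (n\<^sup>2 - 1))"
      using pos by simp
    also have "\<dots> \<le> 2 * k * S * (k / n\<^sup>2)"
    proof -
      have "(k - 1) / (n\<^sup>2 - 1) \<le> k / n\<^sup>2"
        using k n2 pos by (simp add: divide_simps) (simp add: algebra_simps)
      then show ?thesis using k Sb by (intro mult_left_mono) auto
    qed
    finally have D2: "D2 \<le> 2 * k * S * (k / n\<^sup>2)" .
    have "k \<le> k * k" using mult_left_mono[of 1 k k] k by simp
    then have "S * k * (n * n) \<le> S * (k * k) * (n * n)"
      using Sb by (intro mult_right_mono mult_left_mono) auto
    then have "2 * k * S / n\<^sup>2 + 2 * k * S * (k / n\<^sup>2) \<le> 4 * k\<^sup>2 * S / n\<^sup>2"
      using pos by (simp add: field_simps power2_eq_square mult_ac)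
    then show "D1 + D2 \<le> 4 * k\<^sup>2 * S / n\<^sup>2" using D1 D2 by linarith
  qed
  ultimately show ?thesis by (simp add: abs_le_iff)
qed

lemma cosh_weight_sq_minus_sinh_weight_sq:
  "z n l \<noteq> 0 \<Longrightarrow> (cosh_weight n z l)\<^sup>2 - (sinh_weight n z l)\<^sup>2 = 1"
  by (simp add: cosh_weight_def sinh_weight_def power2_eq_square field_simps)

lemma cosh_weight_bounds:
  assumes "1 \<le> z n l"
  shows "0 \<le> cosh_weight n z l" "cosh_weight n z l \<le> z n l"
proof -
  define y where "y = 1 / z n l"
  have "0 < y" "y \<le> 1" using assms by (auto simp: y_def)
  then show "0 \<le> cosh_weight n z l" "cosh_weight n z l \<le> z n l"
    using assms unfolding cosh_weight_def y_def[symmetric] by auto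
qed

lemma avg_energy_eq: "avg_energy n z = (\<Sum>l<n. cosh_weight n z l) / real n"
  by (simp add: avg_energy_def cosh_weight_def sum_divide_distrib[symmetric])

lemma avg_energy_nonneg: "(\<And>l. l < n \<Longrightarrow> 1 \<le> z n l) \<Longrightarrow> 0 \<le> avg_energy n z"
  unfolding avg_energy_eq by (intro divide_nonneg_nonneg sum_nonneg cosh_weight_bounds) auto

lemma Znorm_ge: "l < n \<Longrightarrow> \<bar>z n l\<bar> \<le> Znorm n z"
  unfolding Znorm_def by (intro Max_ge) auto

lemma expected_trace_JM_squared_error:
  assumes "haar_unitary n \<mu>" "2 \<le> n" "1 \<le> k" "k \<le> n" and z: "\<And>l. l < n \<Longrightarrow> 1 \<le> z n l"
  shows "\<bar>(\<integral>U. mtrace (2 * k) (mmul (2 * k) (mmul (2 * k) (Jmat k) (Mnk n k z U))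
                                         (mmul (2 * k) (Jmat k) (Mnk n k z U))) \<partial>\<mu>)
          - (- 2 * real k * (avg_energy n z)\<^sup>2)\<bar>
         \<le> 4 * (real k)\<^sup>2 * Znorm n z * avg_energy n z / real n"
proof -
  interpret haar_unitary_space n \<mu> by (rule haar_unitary_space.intro) fact
  define T where "T = (\<Sum>l<n. cosh_weight n z l)"
  define S where "S = (\<Sum>l<n. (cosh_weight n z l)\<^sup>2)"
  define Sb where "Sb = (\<Sum>l<n. (sinh_weight n z l)\<^sup>2)"
  have z0: "z n l \<noteq> 0" if "l < n" for l using z[OF that] by auto
  have "T\<^sup>2 \<le> real n * S"
    using Cauchy_Schwarz_ineq_sum[of "\<lambda>_. 1" "cosh_weight n z" "{..<n}"] by (simp add: T_def S_def)
  moreover have "Sb \<le> S"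
    unfolding Sb_def S_def using cosh_weight_sq_minus_sinh_weight_sq[where z = z, OF z0]
    by (intro sum_mono) (simp add: algebra_simps)
  ultimately have "\<bar>(\<integral>U. mtrace (2 * k) (mmul (2 * k) (mmul (2 * k) (Jmat k) (Mnk n k z U))
                                         (mmul (2 * k) (Jmat k) (Mnk n k z U))) \<partial>\<mu>)
          - (- 2 * real k * (avg_energy n z)\<^sup>2)\<bar> \<le> 4 * (real k)\<^sup>2 * S / (real n)\<^sup>2"
    using trace_error_bound[of "real n" "real k" T S Sb] assms(2-4)
    by (simp add: expected_trace_JM_squared[OF assms(2,4)] avg_energy_eq T_def S_def Sb_def sum_nonneg)
  also have "\<dots> \<le> 4 * (real k)\<^sup>2 * (Znorm n z * T) / (real n)\<^sup>2"
  proof -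
    have "(cosh_weight n z l)\<^sup>2 \<le> Znorm n z * cosh_weight n z l" if "l < n" for l
      using cosh_weight_bounds[where z = z, OF z[OF that]] Znorm_ge[OF that, of z] z[OF that]
      by (simp add: power2_eq_square mult_right_mono)
    then have "S \<le> Znorm n z * T"
      unfolding S_def T_def sum_distrib_left by (intro sum_mono) auto
    then show ?thesis by (intro divide_right_mono mult_left_mono) auto
  qed
  also have "\<dots> = 4 * (real k)\<^sup>2 * Znorm n z * avg_energy n z / real n"
    by (simp add: avg_energy_eq T_def power2_eq_square)
  finally show ?thesis .
qed

lemma error_term_powr_bound:
  fixes x k K Z C L B \<kappa> \<zeta> :: real
  assumes "0 < x" "0 \<le> k" "k \<le> K * x powr \<kappa>" "0 \<le> Z" "Z \<le> C * x powr \<zeta>" "0 \<le> L" "L \<le> B"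
  shows "4 * k\<^sup>2 * Z * L / x \<le> 4 * K\<^sup>2 * C * B * x powr (2 * \<kappa> + \<zeta> - 1)"
proof -
  have k2: "k\<^sup>2 \<le> (K * x powr \<kappa>)\<^sup>2"
    using assms(2,3) by (intro power_mono)
  have ZL: "Z * L \<le> (C * x powr \<zeta>) * B"
    using assms(4-7) by (intro mult_mono) auto
  have "k\<^sup>2 * (Z * L) \<le> (K * x powr \<kappa>)\<^sup>2 * ((C * x powr \<zeta>) * B)"
    by (rule mult_mono[OF k2 ZL]) (use assms(4,6) in auto)
  then have "4 * k\<^sup>2 * Z * L / x \<le> 4 * ((K * x powr \<kappa>)\<^sup>2 * ((C * x powr \<zeta>) * B)) / x"
    using assms(1) by (intro divide_right_mono) (simp_all add: mult.assoc)
  also have "\<dots> = 4 * K\<^sup>2 * C * B * (x powr \<kappa> * x powr \<kappa> * x powr \<zeta> / x)"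
    by (simp only: power2_eq_square mult_ac times_divide_eq_right)
  also have "x powr \<kappa> * x powr \<kappa> * x powr \<zeta> / x = x powr (2 * \<kappa> + \<zeta> - 1)"
  proof -
    have "2 * \<kappa> + \<zeta> - 1 = \<kappa> + \<kappa> + \<zeta> - 1" by simp
    then show ?thesis using assms(1) by (simp only: powr_diff powr_add powr_one)
  qed
  finally show ?thesis .
qed

theorem corollary1:
  fixes z :: "nat \<Rightarrow> nat \<Rightarrow> real"
    and k :: "nat \<Rightarrow> nat"
    and \<zeta> \<kappa> :: real
    and \<mu> :: "nat \<Rightarrow> (nat \<Rightarrow> nat \<Rightarrow> complex) measure"
  assumes z_ge1: "\<And>n j. j < n \<Longrightarrow> z n j \<ge> 1"
    and zeta: "0 \<le> \<zeta>" "\<zeta> < 1"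
    and squeezing: "\<exists>C>0. \<forall>\<^sub>F n in sequentially. Znorm n z \<le> C * real n powr \<zeta>"
    and energy_bdd: "\<exists>B. \<forall>n. avg_energy n z \<le> B"
    and k_range: "\<And>n. n \<ge> 1 \<Longrightarrow> 1 \<le> k n \<and> k n \<le> n"
    and kappa: "0 \<le> \<kappa>" "\<kappa> < 1"
    and k_bdd: "\<exists>K>0. \<forall>\<^sub>F n in sequentially. real (k n) \<le> K * real n powr \<kappa>"
    and haar: "\<And>n. haar_unitary n (\<mu> n)"
  shows "\<exists>C. \<forall>\<^sub>F n in sequentially.
     \<bar>(\<integral>U. mtrace (2 * k n) (mmul (2 * k n) (mmul (2 * k n) (Jmat (k n)) (Mnk n (k n) z U))
                                               (mmul (2 * k n) (Jmat (k n)) (Mnk n (k n) z U))) \<partial>\<mu> n)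
       - (- 2 * real (k n) * (avg_energy n z)\<^sup>2)\<bar>
     \<le> C * real n powr (2 * \<kappa> + \<zeta> - 1)"
  (is "\<exists>C. \<forall>\<^sub>F n in sequentially. ?err n \<le> C * ?rate n")
proof -
  obtain Cz where Cz: "\<forall>\<^sub>F n in sequentially. Znorm n z \<le> Cz * real n powr \<zeta>"
    using squeezing by blast
  obtain K where K: "\<forall>\<^sub>F n in sequentially. real (k n) \<le> K * real n powr \<kappa>"
    using k_bdd by blast
  obtain B where B: "\<And>n. avg_energy n z \<le> B"
    using energy_bdd by blast
  have "\<forall>\<^sub>F n in sequentially. ?err n \<le> 4 * K\<^sup>2 * Cz * B * ?rate n"
    using Cz K eventually_ge_at_top[of 2]
  proof eventually_elim
    case (elim n)
    then have k: "1 \<le> k n" "k n \<le> n" using k_range[of n] by auto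
    have "?err n \<le> 4 * (real (k n))\<^sup>2 * Znorm n z * avg_energy n z / real n"
      using z_ge1 by (intro expected_trace_JM_squared_error[OF haar elim(3) k]) auto
    also have "\<dots> \<le> 4 * K\<^sup>2 * Cz * B * ?rate n"
      using elim Znorm_ge[of 0 n z] avg_energy_nonneg[of n z] z_ge1 B[of n]
      by (intro error_term_powr_bound) auto
    finally show ?case .
  qed
  then show ?thesis by blast
qed

end
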